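(* Let $a,d$ be real numbers and let $T_n(t,a,d)$ be the general Eulerian polynomials defined below. Then, as an identity of formal power series in $u$ with coefficients in the field $\mathbb{R}(t)$ of rational functions in $t$, $$\sum_{n\ge 0}T_n(t,a,d)\frac{u^n}{n!}=\frac{(t-1)\exp(au(t-1))}{t-\exp(du(t-1))}.$$
   Context: For real numbers $a,d$, the general Eulerian numbers $A_{n,k}(a,d)$ (integers $n\ge 0$, $k$) are defined by $A_{0,-1}(a,d)=1$, $A_{n,k}(a,d)=0$ whenever $k\ge n$ or $k\le -2$, and for $n\ge 1$, $-1\le k\le n-1$: $$A_{n,k}(a,d)=(-a+(k+2)d)A_{n-1,k}(a,d)+(a+(n-k-1)d)A_{n-1,k-1}(a,d).$$ The general Eulerian polynomials are $T_n(t,a,d)=\sum_{k=-1}^{n-1}A_{n,k}(a,d)t^{k+1}$ (so $T_0(t,a,d)=1$). Note $t-\exp(du(t-1))$ has constant term $t-1\neq 0$ in $\mathbb{R}(t)[[u]]$, hence is invertible. *)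

theory Defs
  imports "HOL-Computational_Algebra.Computational_Algebra"
begin

fun genEulerA :: "real \<Rightarrow> real \<Rightarrow> nat \<Rightarrow> int \<Rightarrow> real" where
  "genEulerA a d 0 k = (if k = -1 then 1 else 0)"
| "genEulerA a d (Suc n) k =
     (if k \<ge> int (Suc n) \<or> k \<le> -2 then 0
      else (- a + (of_int k + 2) * d) * genEulerA a d n k
         + (a + (of_int (int (Suc n) - k - 1)) * d) * genEulerA a d n (k - 1))"

definition genEulerT :: "real \<Rightarrow> real \<Rightarrow> nat \<Rightarrow> real poly" where
  "genEulerT a d n = (\<Sum>k\<in>{-1..int n - 1}. monom (genEulerA a d n k) (nat (k + 1)))"

text \<open>The field R(t) of rational functions is modelled as real poly fract; tvar is t.\<close>
definition tvar :: "real poly fract" where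
  "tvar = to_fract [:0, 1:]"

definition rconst :: "real \<Rightarrow> real poly fract" where
  "rconst c = to_fract [:c:]"

end

theory Submission
  imports Defs
begin

text \<open>Put c = d - a. The series Q n = (1 - x)^(n+1) * (\<Sum>m. (c + m d)^n x^m) satisfy
  Q (n+1) = (c + (d - c + n d) x) Q n + d x (1 - x) Q' n, whose coefficientwise form is the
  recurrence defining A n k; hence T n = Q n. Shifting m by one and expanding (c - d + (m+1) d)^n
  binomially gives t T n - (\<Sum>i\<le>n. (n choose i) T i (d (t - 1))^(n-i)) = (t - 1)^(n+1) a^n,
  the coefficient of u^n/n! in (\<Sum>n. T n u^n/n!) (t - exp (d u (t - 1))) = (t - 1) exp (a u (t - 1)).\<close>

definition affine_power_fps :: "'a::comm_semiring_1 \<Rightarrow> 'a \<Rightarrow> nat \<Rightarrow> 'a fps" where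
  "affine_power_fps c d n = Abs_fps (\<lambda>m. (c + of_nat m * d) ^ n)"

definition eulerian_fps :: "'a::comm_ring_1 \<Rightarrow> 'a \<Rightarrow> nat \<Rightarrow> 'a fps" where
  "eulerian_fps c d n = (1 - fps_X) ^ Suc n * affine_power_fps c d n"

lemma affine_power_fps_Suc:
  "affine_power_fps c d (Suc n) =
     fps_const c * affine_power_fps c d n + fps_const d * (fps_X * fps_deriv (affine_power_fps c d n))"
  unfolding fps_mult_fps_X_deriv_shift
  by (rule fps_ext) (simp add: affine_power_fps_def algebra_simps)

lemma fps_deriv_one_minus_X_power:
  "fps_deriv ((1 - fps_X :: 'a::comm_ring_1 fps) ^ Suc n) = - (of_nat n + 1) * (1 - fps_X) ^ n"
proof (induction n)
  case (Suc n)
  have "fps_deriv ((1 - fps_X :: 'a fps) ^ Suc (Suc n)) =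
      - ((1 - fps_X) ^ Suc n) + (1 - fps_X) * fps_deriv ((1 - fps_X) ^ Suc n)"
    by (simp only: power_Suc[of _ "Suc n"] fps_deriv_mult) simp
  also have "\<dots> = - ((1 - fps_X) ^ Suc n) + (1 - fps_X) * (- (of_nat n + 1) * (1 - fps_X) ^ n)"
    by (simp only: Suc)
  finally show ?case
    by (simp add: algebra_simps)
qed simp

lemma eulerian_fps_Suc:
  "eulerian_fps c d (Suc n) =
     (fps_const c + fps_const (d - c + of_nat n * d) * fps_X) * eulerian_fps c d n
     + fps_const d * fps_X * (1 - fps_X) * fps_deriv (eulerian_fps c d n)"
proof -
  define Y :: "'a fps" where "Y = 1 - fps_X"
  define P where "P = affine_power_fps c d n"
  have X: "fps_X = 1 - Y"
    by (simp add: Y_def)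
  have dY: "fps_deriv (Y ^ Suc n) = - (of_nat n + 1) * Y ^ n"
    unfolding Y_def by (rule fps_deriv_one_minus_X_power)
  have deriv: "fps_deriv (eulerian_fps c d n) = Y ^ n * Y * fps_deriv P - (of_nat n + 1) * Y ^ n * P"
    unfolding eulerian_fps_def Y_def[symmetric] P_def[symmetric] fps_deriv_mult dY
    by (simp add: algebra_simps)
  have E: "eulerian_fps c d n = Y ^ n * Y * P"
    by (simp add: eulerian_fps_def Y_def P_def)
  have ES: "eulerian_fps c d (Suc n) = Y ^ n * Y * Y * (fps_const c * P + fps_const d * (fps_X * fps_deriv P))"
    by (simp add: eulerian_fps_def affine_power_fps_Suc algebra_simps flip: P_def Y_def)
  have const: "fps_const (d - c + of_nat n * d) = fps_const d - fps_const c + of_nat n * fps_const d"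
    by (simp flip: fps_of_nat)
  show ?thesis
    unfolding ES deriv unfolding E const X
    by (simp add: algebra_simps del: fps_const_sub fps_const_neg)
qed

lemma eulerian_fps_Suc_nth_0: "eulerian_fps c d (Suc n) $ 0 = c * eulerian_fps c d n $ 0"
  by (subst eulerian_fps_Suc) simp

lemma eulerian_fps_Suc_nth_Suc:
  "eulerian_fps c d (Suc n) $ Suc i =
     (c + (of_nat i + 1) * d) * eulerian_fps c d n $ Suc i
     + (d - c + of_nat n * d - of_nat i * d) * eulerian_fps c d n $ i"
proof -
  define Q where "Q = eulerian_fps c d n"
  have "fps_const d * fps_X * (1 - fps_X) * fps_deriv Q =
      fps_const d * (fps_X * fps_deriv Q) - fps_const d * fps_X * (fps_X * fps_deriv Q)"
    by (simp add: algebra_simps)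
  then show ?thesis
    unfolding eulerian_fps_Suc Q_def[symmetric] distrib_right
    by (simp only: fps_add_nth fps_sub_nth fps_mult_fps_X_deriv_shift)
      (simp add: algebra_simps)
qed

lemma eulerian_fps_0: "eulerian_fps c d 0 = 1"
proof (rule fps_ext)
  fix j
  have "eulerian_fps c d 0 = Abs_fps (\<lambda>_. 1) - fps_X * Abs_fps (\<lambda>_. 1)"
    by (simp add: eulerian_fps_def affine_power_fps_def algebra_simps)
  then show "eulerian_fps c d 0 $ j = 1 $ j"
    by simp
qed

lemma eulerian_fps_nth_eq_0: "n < j \<Longrightarrow> eulerian_fps c d n $ j = 0"
proof (induction n arbitrary: j)
  case 0
  then show ?case
    by (simp add: eulerian_fps_0)
next
  case (Suc n)
  then obtain i where "j = Suc i" and "n < i"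
    by (cases j) auto
  then show ?case
    by (simp add: eulerian_fps_Suc_nth_Suc Suc.IH)
qed

lemma genEulerA_eq_0_below: "k \<le> -2 \<Longrightarrow> genEulerA a d n k = 0"
  by (cases n) simp_all

lemma genEulerA_eq_eulerian_fps_nth:
  "genEulerA a d n (int j - 1) = eulerian_fps (d - a) d n $ j"
proof (induction n arbitrary: j)
  case 0
  then show ?case
    by (simp add: eulerian_fps_0)
next
  case (Suc n)
  show ?case
  proof (cases j)
    case 0
    then show ?thesis
      using Suc.IH[of 0] by (simp add: genEulerA_eq_0_below eulerian_fps_Suc_nth_0)
  next
    case (Suc i)
    show ?thesis
    proof (cases "i \<le> n")
      case True
      then show ?thesis
        using Suc.IH[of i] Suc.IH[of "Suc i"]
        by (simp add: \<open>j = Suc i\<close> eulerian_fps_Suc_nth_Suc algebra_simps)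
    next
      case False
      then show ?thesis
        by (simp add: \<open>j = Suc i\<close> eulerian_fps_nth_eq_0)
    qed
  qed
qed

lemma coeff_genEulerT: "coeff (genEulerT a d n) j = eulerian_fps (d - a) d n $ j"
proof -
  have "coeff (genEulerT a d n) j =
      (\<Sum>k\<in>{-1..int n - 1}. if k = int j - 1 then genEulerA a d n k else 0)"
    unfolding genEulerT_def coeff_sum coeff_monom by (intro sum.cong) auto
  also have "\<dots> = (if int j - 1 \<in> {-1..int n - 1} then genEulerA a d n (int j - 1) else 0)"
    by (rule sum.delta) simp
  also have "\<dots> = eulerian_fps (d - a) d n $ j"
    by (auto simp: genEulerA_eq_eulerian_fps_nth eulerian_fps_nth_eq_0)
  finally show ?thesis .
qed

lemma fps_of_poly_genEulerT: "fps_of_poly (genEulerT a d n) = eulerian_fps (d - a) d n"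
  by (rule fps_ext) (simp add: coeff_genEulerT)

lemma affine_power_fps_binomial:
  "affine_power_fps (c + e) d n =
     (\<Sum>i\<le>n. fps_const (of_nat (n choose i) * e ^ (n - i)) * affine_power_fps c d i)"
proof (rule fps_ext)
  fix m
  have "(c + e + of_nat m * d) ^ n = ((c + of_nat m * d) + e) ^ n"
    by (simp add: algebra_simps)
  also have "\<dots> = (\<Sum>i\<le>n. of_nat (n choose i) * e ^ (n - i) * (c + of_nat m * d) ^ i)"
    by (subst binomial_ring) (simp add: mult_ac)
  finally show "affine_power_fps (c + e) d n $ m =
      (\<Sum>i\<le>n. fps_const (of_nat (n choose i) * e ^ (n - i)) * affine_power_fps c d i) $ m"
    by (simp add: affine_power_fps_def fps_sum_nth)
qed

lemma fps_X_mult_affine_power_fps: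
  fixes c d :: "'a::comm_ring_1"
  shows "fps_X * affine_power_fps c d n = affine_power_fps (c - d) d n - fps_const ((c - d) ^ n)"
proof (rule fps_ext)
  fix m
  show "(fps_X * affine_power_fps c d n) $ m = (affine_power_fps (c - d) d n - fps_const ((c - d) ^ n)) $ m"
    by (cases m) (simp_all add: affine_power_fps_def algebra_simps)
qed

lemma eulerian_fps_binomial_recurrence:
  "fps_X * eulerian_fps c d n
     - (\<Sum>i\<le>n. of_nat (n choose i) * eulerian_fps c d i * (fps_const d * (fps_X - 1)) ^ (n - i))
   = (fps_X - 1) ^ Suc n * fps_const ((d - c) ^ n)"
proof -
  define Y :: "'a fps" where "Y = 1 - fps_X"
  have summand: "of_nat (n choose i) * eulerian_fps c d i * (fps_const d * (fps_X - 1)) ^ (n - i)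
      = Y ^ Suc n * (fps_const (of_nat (n choose i) * (- d) ^ (n - i)) * affine_power_fps c d i)"
    if "i \<le> n" for i
  proof -
    have "fps_const d * (fps_X - 1) = fps_const (- d) * Y"
      by (simp add: Y_def algebra_simps)
    moreover have "Suc n = Suc i + (n - i)"
      using that by simp
    then have "Y ^ Suc n = Y ^ Suc i * Y ^ (n - i)"
      by (metis power_add)
    ultimately show ?thesis
      by (simp add: eulerian_fps_def fps_of_nat algebra_simps
          flip: Y_def fps_const_power fps_const_mult)
  qed
  have "(\<Sum>i\<le>n. of_nat (n choose i) * eulerian_fps c d i * (fps_const d * (fps_X - 1)) ^ (n - i))
      = (\<Sum>i\<le>n. Y ^ Suc n * (fps_const (of_nat (n choose i) * (- d) ^ (n - i)) * affine_power_fps c d i))"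
    by (rule sum.cong) (simp_all add: summand)
  also have "\<dots> = Y ^ Suc n * affine_power_fps (c + - d) d n"
    by (simp only: affine_power_fps_binomial sum_distrib_left)
  finally have "fps_X * eulerian_fps c d n
      - (\<Sum>i\<le>n. of_nat (n choose i) * eulerian_fps c d i * (fps_const d * (fps_X - 1)) ^ (n - i))
      = Y ^ Suc n * (fps_X * affine_power_fps c d n - affine_power_fps (c - d) d n)"
    by (simp add: eulerian_fps_def algebra_simps flip: Y_def)
  also have "\<dots> = (- (fps_X - 1)) ^ Suc n * - (fps_const (c - d) ^ n)"
    by (simp add: fps_X_mult_affine_power_fps Y_def)
  also have "\<dots> = (fps_X - 1) ^ Suc n * (- fps_const (c - d)) ^ n"
    by (simp only: power_minus[of "fps_X - 1"] power_minus[of "fps_const (c - d)"]) (simp add: algebra_simps)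
  also have "\<dots> = (fps_X - 1) ^ Suc n * fps_const ((d - c) ^ n)"
    by simp
  finally show ?thesis .
qed

lemma fps_of_poly_of_nat: "fps_of_poly (of_nat n) = of_nat n"
  by (induction n) (simp_all add: fps_of_poly_add)

lemma genEulerT_binomial_recurrence:
  "[:0, 1:] * genEulerT a d n
     - (\<Sum>i\<le>n. of_nat (n choose i) * genEulerT a d i * ([:d:] * ([:0, 1:] - 1)) ^ (n - i))
   = ([:0, 1:] - 1) ^ Suc n * [:a:] ^ n"
proof -
  have "fps_of_poly ([:0, 1:] * genEulerT a d n
        - (\<Sum>i\<le>n. of_nat (n choose i) * genEulerT a d i * ([:d:] * ([:0, 1:] - 1)) ^ (n - i)))
      = fps_of_poly (([:0, 1:] - 1) ^ Suc n * [:a:] ^ n)"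
    using eulerian_fps_binomial_recurrence[of "d - a" d n]
    by (simp only: fps_of_poly_diff fps_of_poly_mult fps_of_poly_sum fps_of_poly_power fps_of_poly_of_nat
        fps_of_poly_const fps_of_poly_fps_X fps_of_poly_1 fps_of_poly_genEulerT) simp
  then show ?thesis
    by (simp only: fps_of_poly_eq_iff)
qed

lemma to_fract_power: "to_fract (x ^ n) = to_fract x ^ n"
  by (induction n) simp_all

lemma to_fract_of_nat: "to_fract (of_nat n) = of_nat n"
  by (induction n) simp_all

lemma genEulerT_binomial_recurrence_fract:
  "tvar * to_fract (genEulerT a d n)
     - (\<Sum>i\<le>n. of_nat (n choose i) * to_fract (genEulerT a d i) * (rconst d * (tvar - 1)) ^ (n - i))
   = (tvar - 1) ^ Suc n * rconst a ^ n"
  using arg_cong[OF genEulerT_binomial_recurrence, of to_fract a d n]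
  unfolding tvar_def rconst_def
  by (simp only: to_fract_diff to_fract_mult to_fract_sum to_fract_power to_fract_of_nat to_fract_1)

lemma egf_mult_fps_exp:
  fixes f :: "nat \<Rightarrow> 'a::field_char_0"
  shows "Abs_fps (\<lambda>n. f n / fact n) * fps_exp x =
    Abs_fps (\<lambda>n. (\<Sum>i\<le>n. of_nat (n choose i) * f i * x ^ (n - i)) / fact n)"
proof (rule fps_ext)
  fix n
  have "f i / fact i * (x ^ (n - i) / fact (n - i)) = of_nat (n choose i) * f i * x ^ (n - i) / fact n"
    if "i \<le> n" for i
    using that by (simp add: binomial_fact field_simps)
  then show "(Abs_fps (\<lambda>n. f n / fact n) * fps_exp x) $ n =
      Abs_fps (\<lambda>n. (\<Sum>i\<le>n. of_nat (n choose i) * f i * x ^ (n - i)) / fact n) $ n"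
    by (simp add: fps_mult_nth atLeast0AtMost sum_divide_distrib)
qed

lemma tvar_neq_1: "tvar \<noteq> 1"
  by (simp add: tvar_def one_pCons flip: to_fract_1)

lemma genEulerT_egf_mult:
  "Abs_fps (\<lambda>n. to_fract (genEulerT a d n) / fact n) * (fps_const tvar - fps_exp (rconst d * (tvar - 1)))
     = fps_const (tvar - 1) * fps_exp (rconst a * (tvar - 1))"
proof (rule fps_ext)
  fix n
  define T where "T n = to_fract (genEulerT a d n)" for n
  define x where "x = rconst d * (tvar - 1)"
  have "(Abs_fps (\<lambda>n. T n / fact n) * (fps_const tvar - fps_exp x)) $ n
      = (tvar * T n - (\<Sum>i\<le>n. of_nat (n choose i) * T i * x ^ (n - i))) / fact n"
    by (simp only: right_diff_distrib fps_sub_nth fps_mult_right_const_nth egf_mult_fps_exp fps_nth_Abs_fps)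
      (simp add: diff_divide_distrib mult_ac)
  also have "\<dots> = (tvar - 1) ^ Suc n * rconst a ^ n / fact n"
    unfolding T_def x_def genEulerT_binomial_recurrence_fract ..
  also have "\<dots> = (fps_const (tvar - 1) * fps_exp (rconst a * (tvar - 1))) $ n"
    by (simp add: power_mult_distrib mult_ac)
  finally show "(Abs_fps (\<lambda>n. T n / fact n) * (fps_const tvar - fps_exp x)) $ n
      = (fps_const (tvar - 1) * fps_exp (rconst a * (tvar - 1))) $ n" .
qed

theorem lemma3p3:
  fixes a d :: real
  shows "Abs_fps (\<lambda>n. to_fract (genEulerT a d n) / of_nat (fact n))
       = (fps_const (tvar - 1) * fps_exp (rconst a * (tvar - 1)))
         / (fps_const tvar - fps_exp (rconst d * (tvar - 1)))"
proof -
  have "fps_const tvar - fps_exp (rconst d * (tvar - 1)) \<noteq> 0"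
    using tvar_neq_1 by (auto simp: fps_eq_iff dest: spec[of _ 0])
  then have "Abs_fps (\<lambda>n. to_fract (genEulerT a d n) / fact n)
      = Abs_fps (\<lambda>n. to_fract (genEulerT a d n) / fact n)
        * (fps_const tvar - fps_exp (rconst d * (tvar - 1))) / (fps_const tvar - fps_exp (rconst d * (tvar - 1)))"
    by simp
  also note genEulerT_egf_mult
  finally show ?thesis
    by simp
qed

end
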